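(* There is no nonzero finite-dimensional smooth genuine $k$-representation of $\widetilde G$.
   Context: Let $p$ be an odd prime and $k$ an algebraically closed field of characteristic $p$. Let $G=\mathrm{GL}_2(\mathbb{Q}_p)$, $v$ the $p$-adic valuation, $\mu_2=\{\pm1\}$, $\omega\colon\mathbb{Q}_p^\times\to\mathbb{F}_p^\times$, $x\mapsto (xp^{-v(x)}\bmod p)$, Hilbert symbol $(a,b)=\omega\big((-1)^{v(a)v(b)}b^{v(a)}/a^{v(b)}\big)^{(p-1)/2}$. For $g=\begin{pmatrix}a&b\\c&d\end{pmatrix}$ put $\mathfrak c(g)=c$ if $c\neq0$, $\mathfrak c(g)=d$ if $c=0$. The metaplectic cover $\widetilde G$ is the topological group $G\times\mu_2$ with $(g_1,\zeta_1)(g_2,\zeta_2)=(g_1g_2,\zeta_1\zeta_2\sigma(g_1,g_2))$, $\sigma(g_1,g_2)=\big(\mathfrak c(g_1g_2)/\mathfrak c(g_1),\ \det(g_1)\mathfrak c(g_1g_2)/\mathfrak c(g_2)\big)$. $\iota\colon\mu_2\to k^\times$ is the nontrivial character; a smooth representation is genuine if $\mu_2$ acts through $\iota$. *)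

theory Defs
  imports "HOL-Analysis.Analysis" "HOL-Computational_Algebra.Computational_Algebra"
    "HOL-Number_Theory.Number_Theory"
begin

text \<open>p-adic valuation of a nonzero rational (value 0 at 0, never used there).\<close>
definition rat_val :: "nat \<Rightarrow> rat \<Rightarrow> int" where
  "rat_val p r = (if r = 0 then 0 else
     (let (a, b) = quotient_of r in
        int (multiplicity (int p) a) - int (multiplicity (int p) b)))"

definition rat_pabs :: "nat \<Rightarrow> rat \<Rightarrow> real" where
  "rat_pabs p r = (if r = 0 then 0 else real p powr (- real_of_int (rat_val p r)))"

definition pcauchy :: "nat \<Rightarrow> (nat \<Rightarrow> rat) \<Rightarrow> bool" where
  "pcauchy p f \<longleftrightarrow> (\<forall>e>0. \<exists>N. \<forall>m\<ge>N. \<forall>n\<ge>N. rat_pabs p (f m - f n) < e)"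

definition pequiv :: "nat \<Rightarrow> ((nat \<Rightarrow> rat) \<times> (nat \<Rightarrow> rat)) set" where
  "pequiv p = {(f, g). pcauchy p f \<and> pcauchy p g \<and>
                  (\<lambda>n. rat_pabs p (f n - g n)) \<longlonglongrightarrow> 0}"

definition Qp :: "nat \<Rightarrow> (nat \<Rightarrow> rat) set set" where
  "Qp p = {f. pcauchy p f} // pequiv p"

definition qcls :: "nat \<Rightarrow> (nat \<Rightarrow> rat) \<Rightarrow> (nat \<Rightarrow> rat) set" where
  "qcls p f = pequiv p `` {f}"

definition qrep :: "(nat \<Rightarrow> rat) set \<Rightarrow> nat \<Rightarrow> rat" where
  "qrep X = (SOME f. f \<in> X)"

definition qof_rat :: "nat \<Rightarrow> rat \<Rightarrow> (nat \<Rightarrow> rat) set" where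
  "qof_rat p r = qcls p (\<lambda>_. r)"

definition qzero :: "nat \<Rightarrow> (nat \<Rightarrow> rat) set" where "qzero p = qof_rat p 0"
definition qone :: "nat \<Rightarrow> (nat \<Rightarrow> rat) set" where "qone p = qof_rat p 1"

definition qadd :: "nat \<Rightarrow> (nat \<Rightarrow> rat) set \<Rightarrow> (nat \<Rightarrow> rat) set \<Rightarrow> (nat \<Rightarrow> rat) set" where
  "qadd p X Y = qcls p (\<lambda>n. qrep X n + qrep Y n)"

definition qneg :: "nat \<Rightarrow> (nat \<Rightarrow> rat) set \<Rightarrow> (nat \<Rightarrow> rat) set" where
  "qneg p X = qcls p (\<lambda>n. - qrep X n)"

definition qsub :: "nat \<Rightarrow> (nat \<Rightarrow> rat) set \<Rightarrow> (nat \<Rightarrow> rat) set \<Rightarrow> (nat \<Rightarrow> rat) set" where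
  "qsub p X Y = qadd p X (qneg p Y)"

definition qmul :: "nat \<Rightarrow> (nat \<Rightarrow> rat) set \<Rightarrow> (nat \<Rightarrow> rat) set \<Rightarrow> (nat \<Rightarrow> rat) set" where
  "qmul p X Y = qcls p (\<lambda>n. qrep X n * qrep Y n)"

text \<open>Multiplicative inverse (for nonzero X; terms of the representative that vanish are
  replaced by 0, which does not change the class).\<close>
definition qinv :: "nat \<Rightarrow> (nat \<Rightarrow> rat) set \<Rightarrow> (nat \<Rightarrow> rat) set" where
  "qinv p X = qcls p (\<lambda>n. inverse (qrep X n))"

definition qdiv :: "nat \<Rightarrow> (nat \<Rightarrow> rat) set \<Rightarrow> (nat \<Rightarrow> rat) set \<Rightarrow> (nat \<Rightarrow> rat) set" where
  "qdiv p X Y = qmul p X (qinv p Y)"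

definition qpow :: "nat \<Rightarrow> (nat \<Rightarrow> rat) set \<Rightarrow> nat \<Rightarrow> (nat \<Rightarrow> rat) set" where
  "qpow p X n = (qmul p X ^^ n) (qone p)"

definition qpowi :: "nat \<Rightarrow> (nat \<Rightarrow> rat) set \<Rightarrow> int \<Rightarrow> (nat \<Rightarrow> rat) set" where
  "qpowi p X k = (if k \<ge> 0 then qpow p X (nat k) else qinv p (qpow p X (nat (- k))))"

definition qval :: "nat \<Rightarrow> (nat \<Rightarrow> rat) set \<Rightarrow> int" where
  "qval p X = (THE v. eventually (\<lambda>n. rat_val p (qrep X n) = v) sequentially)"

text \<open>Residue mod p of a rational with p-adic valuation 0 (as an integer in [0,p)).\<close>
definition rat_res :: "nat \<Rightarrow> rat \<Rightarrow> int" where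
  "rat_res p r = (let (a, b) = quotient_of r in
                    (THE z. 0 \<le> z \<and> z < int p \<and> [a = z * b] (mod int p)))"

text \<open>omega(x) = (x p^(-v(x)) mod p), an element of F_p^x, represented in {1,...,p-1}.\<close>
definition omega :: "nat \<Rightarrow> (nat \<Rightarrow> rat) set \<Rightarrow> int" where
  "omega p X = (let U = qmul p X (qof_rat p (of_nat p powi (- qval p X))) in
                 (THE z. eventually (\<lambda>n. rat_res p (qrep U n) = z) sequentially))"

text \<open>Hilbert symbol (a,b) = omega((-1)^(v(a)v(b)) b^v(a) / a^v(b))^((p-1)/2) in F_p^x,
  which lies in {1,-1} = mu_2; we return it as the integer 1 or -1.\<close>
definition hilbert :: "nat \<Rightarrow> (nat \<Rightarrow> rat) set \<Rightarrow> (nat \<Rightarrow> rat) set \<Rightarrow> int" where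
  "hilbert p a b =
     (let w = omega p (qdiv p (qmul p (qpowi p (qof_rat p (-1)) (qval p a * qval p b))
                                      (qpowi p b (qval p a)))
                              (qpowi p a (qval p b)));
          s = (w ^ ((p - 1) div 2)) mod int p
      in if s = 1 then 1 else -1)"

type_synonym qp = "(nat \<Rightarrow> rat) set"
type_synonym mat2 = "qp \<times> qp \<times> qp \<times> qp"  \<comment> \<open>(a, b, c, d) = [[a, b], [c, d]]\<close>

definition mmul :: "nat \<Rightarrow> mat2 \<Rightarrow> mat2 \<Rightarrow> mat2" where
  "mmul p g h = (case g of (a, b, c, d) \<Rightarrow> case h of (a', b', c', d') \<Rightarrow>
     (qadd p (qmul p a a') (qmul p b c'), qadd p (qmul p a b') (qmul p b d'),
      qadd p (qmul p c a') (qmul p d c'), qadd p (qmul p c b') (qmul p d d')))"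

definition mdet :: "nat \<Rightarrow> mat2 \<Rightarrow> qp" where
  "mdet p g = (case g of (a, b, c, d) \<Rightarrow> qsub p (qmul p a d) (qmul p b c))"

definition mone :: "nat \<Rightarrow> mat2" where
  "mone p = (qone p, qzero p, qzero p, qone p)"

definition GL2 :: "nat \<Rightarrow> mat2 set" where
  "GL2 p = {(a, b, c, d). a \<in> Qp p \<and> b \<in> Qp p \<and> c \<in> Qp p \<and> d \<in> Qp p \<and>
                          mdet p (a, b, c, d) \<noteq> qzero p}"

definition cfun :: "nat \<Rightarrow> mat2 \<Rightarrow> qp" where
  "cfun p g = (case g of (a, b, c, d) \<Rightarrow> if c \<noteq> qzero p then c else d)"

definition sigma :: "nat \<Rightarrow> mat2 \<Rightarrow> mat2 \<Rightarrow> int" where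
  "sigma p g1 g2 = hilbert p (qdiv p (cfun p (mmul p g1 g2)) (cfun p g1))
                             (qdiv p (qmul p (mdet p g1) (cfun p (mmul p g1 g2))) (cfun p g2))"

text \<open>The metaplectic cover: G x mu_2 with mu_2 = {1,-1} (as integers).\<close>
definition Gt :: "nat \<Rightarrow> (mat2 \<times> int) set" where
  "Gt p = GL2 p \<times> {1, -1}"

definition gt_mult :: "nat \<Rightarrow> mat2 \<times> int \<Rightarrow> mat2 \<times> int \<Rightarrow> mat2 \<times> int" where
  "gt_mult p x y = (case x of (g1, z1) \<Rightarrow> case y of (g2, z2) \<Rightarrow>
                      (mmul p g1 g2, z1 * z2 * sigma p g1 g2))"

definition gt_one :: "nat \<Rightarrow> mat2 \<times> int" where
  "gt_one p = (mone p, 1)"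

text \<open>Principal congruence subgroups K_n = 1 + p^n M_2(Z_p); together with the discreteness
  of mu_2 they give a neighbourhood basis of the identity of the topological group G x mu_2,
  namely the sets K_n x {1}.\<close>
definition vge :: "nat \<Rightarrow> qp \<Rightarrow> nat \<Rightarrow> bool" where
  "vge p x n \<longleftrightarrow> x = qzero p \<or> qval p x \<ge> int n"

definition Kn :: "nat \<Rightarrow> nat \<Rightarrow> mat2 set" where
  "Kn p n = {(a, b, c, d) \<in> GL2 p. vge p (qsub p a (qone p)) n \<and> vge p b n \<and>
                                   vge p c n \<and> vge p (qsub p d (qone p)) n}"

text \<open>A representation of dimension CARD('n) \<ge> 1 over k, given by matrices.\<close>
definition is_rep :: "nat \<Rightarrow> (mat2 \<times> int \<Rightarrow> 'k::field ^'n^'n) \<Rightarrow> bool" where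
  "is_rep p \<rho> \<longleftrightarrow> \<rho> (gt_one p) = mat 1 \<and>
     (\<forall>x\<in>Gt p. \<forall>y\<in>Gt p. \<rho> (gt_mult p x y) = \<rho> x ** \<rho> y)"

text \<open>Smooth: the stabiliser of every vector is open, i.e. contains some K_n x {1}.\<close>
definition is_smooth :: "nat \<Rightarrow> (mat2 \<times> int \<Rightarrow> 'k::field ^'n^'n) \<Rightarrow> bool" where
  "is_smooth p \<rho> \<longleftrightarrow> (\<forall>v::'k^'n. \<exists>n. \<forall>g\<in>Kn p n. \<rho> (g, 1) *v v = v)"

text \<open>Genuine: mu_2 acts through the nontrivial character iota, iota(-1) = -1.\<close>
definition is_genuine :: "nat \<Rightarrow> (mat2 \<times> int \<Rightarrow> 'k::field ^'n^'n) \<Rightarrow> bool" where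
  "is_genuine p \<rho> \<longleftrightarrow> \<rho> (mone p, -1) = - mat 1"

end

theory Submission
  imports Defs
begin

text \<open>
  The genuine cover is non-split in a very concrete way: M = [[1 + x y, x], [y, 1]] and H = M + l
  commute in G, but for suitable rational x, y, l their lifts anticommute, because the two orders
  of multiplication produce the Hilbert symbols (s, s) = 1 and (s, p s) = -1 for a unit s that is
  not a square mod p. A smooth finite-dimensional representation is trivial on some K_N; taking
  y = p^N and conjugating upper unipotent elements into K_N by diagonal matrices shows that the
  lift of M acts trivially. Then \<rho>(H) = \<rho>(M) \<rho>(H) = \<rho>(H) \<rho>(M) (-1) = - \<rho>(H), so the
  invertible operator \<rho>(H) vanishes when 2 \<noteq> 0 in k, which is absurd.
  All elements involved have rational entries, so the computations inside Q_p only need the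
  image of the rationals in the Cauchy-sequence model.
\<close>

section \<open>The p-adic valuation on the rationals\<close>

lemma prime_int_not_dvd_one: "prime p \<Longrightarrow> \<not> int p dvd 1"
  by (metis prime_nat_int_transfer not_prime_unit)

lemma rat_nonzero_fractionE:
  assumes "x \<noteq> (0::rat)"
  obtains a b where "a \<noteq> 0" "b \<noteq> 0" "x = of_int a / of_int b"
proof -
  obtain a b where q: "quotient_of x = (a, b)" by (cases "quotient_of x")
  have "x = of_int a / of_int b" by (rule quotient_of_div[OF q])
  moreover have "b > 0" using quotient_of_denom_pos[OF q] .
  ultimately show ?thesis using that assms by force
qed

lemma rat_val_of_int_divide:
  assumes "prime p" "a \<noteq> 0" "b \<noteq> 0"
  shows "rat_val p (of_int a / of_int b) =
           int (multiplicity (int p) a) - int (multiplicity (int p) b)"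
proof -
  let ?r = "of_int a / of_int b :: rat" and ?m = "multiplicity (int p)"
  obtain a0 b0 where q: "quotient_of ?r = (a0, b0)" by (cases "quotient_of ?r")
  have r: "?r = of_int a0 / of_int b0" by (rule quotient_of_div[OF q])
  have b0: "b0 > 0" using quotient_of_denom_pos[OF q] .
  have r0: "?r \<noteq> 0" using assms by simp
  hence a0: "a0 \<noteq> 0" using r by auto
  have "of_int a * of_int b0 = (of_int a0 * of_int b :: rat)"
    using r assms b0 by (simp add: field_simps)
  hence "a * b0 = a0 * b" by (metis of_int_eq_iff of_int_mult)
  hence "?m (a * b0) = ?m (a0 * b)" by simp
  hence "?m a + ?m b0 = ?m a0 + ?m b"
    using prime_elem_multiplicity_mult_distrib[of "int p"] assms a0 b0 by simp
  thus ?thesis unfolding rat_val_def using q r0 by simp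
qed

lemma rat_val_mult:
  assumes "prime p" "x \<noteq> 0" "y \<noteq> 0"
  shows "rat_val p (x * y) = rat_val p x + rat_val p y"
proof -
  obtain a b where ab: "a \<noteq> 0" "b \<noteq> 0" "x = of_int a / of_int b"
    using rat_nonzero_fractionE[OF assms(2)] by blast
  obtain c d where cd: "c \<noteq> 0" "d \<noteq> 0" "y = of_int c / of_int d"
    using rat_nonzero_fractionE[OF assms(3)] by blast
  let ?m = "multiplicity (int p)"
  have "x * y = of_int (a * c) / of_int (b * d)" using ab cd by simp
  hence "rat_val p (x * y) = int (?m (a * c)) - int (?m (b * d))"
    using rat_val_of_int_divide[OF assms(1), of "a * c" "b * d"] ab cd by simp
  moreover have "rat_val p x = int (?m a) - int (?m b)" "rat_val p y = int (?m c) - int (?m d)"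
    using rat_val_of_int_divide[OF assms(1)] ab cd by auto
  moreover have "?m (a * c) = ?m a + ?m c" "?m (b * d) = ?m b + ?m d"
    using prime_elem_multiplicity_mult_distrib[of "int p"] assms(1) ab cd by auto
  ultimately show ?thesis by simp
qed

lemma rat_val_inverse:
  assumes "prime p" "x \<noteq> 0"
  shows "rat_val p (inverse x) = - rat_val p x"
proof -
  obtain a b where ab: "a \<noteq> 0" "b \<noteq> 0" "x = of_int a / of_int b"
    using rat_nonzero_fractionE[OF assms(2)] by blast
  have "inverse x = of_int b / of_int a" using ab by simp
  thus ?thesis using rat_val_of_int_divide[OF assms(1)] ab by simp
qed

lemma rat_val_of_int_eq_0:
  assumes "prime p" "\<not> int p dvd a"
  shows "rat_val p (of_int a) = 0"
proof -
  have "rat_val p (of_int a / of_int 1) =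
          int (multiplicity (int p) a) - int (multiplicity (int p) 1)"
    using assms by (intro rat_val_of_int_divide) auto
  moreover have "multiplicity (int p) a = 0" "multiplicity (int p) 1 = 0"
    using assms prime_int_not_dvd_one not_dvd_imp_multiplicity_0 by auto
  ultimately show ?thesis by simp
qed

lemma rat_val_one: "prime p \<Longrightarrow> rat_val p 1 = 0"
  using rat_val_of_int_eq_0[of p 1] prime_int_not_dvd_one by simp

lemma rat_val_minus:
  assumes "prime p" "x \<noteq> 0"
  shows "rat_val p (- x) = rat_val p x"
proof -
  have "rat_val p (of_int (-1)) = 0"
    using assms(1) prime_int_not_dvd_one by (intro rat_val_of_int_eq_0) auto
  thus ?thesis using rat_val_mult[OF assms(1), of "-1" x] assms by simp
qed

lemma rat_val_prime_power:
  assumes "prime p"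
  shows "rat_val p (of_nat p ^ k) = int k"
proof -
  have "rat_val p (of_int (int p ^ k) / of_int 1) =
          int (multiplicity (int p) (int p ^ k)) - int (multiplicity (int p) 1)"
    using assms prime_gt_0_nat[OF assms] by (intro rat_val_of_int_divide) auto
  moreover have "multiplicity (int p) 1 = 0"
    using assms prime_int_not_dvd_one not_dvd_imp_multiplicity_0 by auto
  ultimately show ?thesis using multiplicity_prime_power[of "int p"] assms by simp
qed

lemma multiplicity_add_ge:
  fixes q u w :: int
  assumes "\<not> is_unit q" "u + w \<noteq> 0"
  shows "multiplicity q (u + w) \<ge> min (multiplicity q u) (multiplicity q w)"
proof -
  let ?k = "min (multiplicity q u) (multiplicity q w)"
  have "q ^ ?k dvd u" "q ^ ?k dvd w" by (auto intro: multiplicity_dvd')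
  hence "q ^ ?k dvd u + w" by simp
  thus ?thesis using multiplicity_geI assms by blast
qed

lemma rat_val_add_ge:
  assumes "prime p" "x \<noteq> 0" "y \<noteq> 0" "x + y \<noteq> 0"
  shows "rat_val p (x + y) \<ge> min (rat_val p x) (rat_val p y)"
proof -
  obtain a b where ab: "a \<noteq> 0" "b \<noteq> 0" "x = of_int a / of_int b"
    using rat_nonzero_fractionE[OF assms(2)] by blast
  obtain c d where cd: "c \<noteq> 0" "d \<noteq> 0" "y = of_int c / of_int d"
    using rat_nonzero_fractionE[OF assms(3)] by blast
  let ?m = "multiplicity (int p)"
  have xy: "x + y = of_int (a * d + c * b) / of_int (b * d)" using ab cd by (simp add: field_simps)
  have nz: "a * d + c * b \<noteq> 0"
  proof
    assume "a * d + c * b = 0"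
    hence "x + y = 0" unfolding xy by simp
    thus False using assms(4) by simp
  qed
  have "rat_val p (x + y) = int (?m (a * d + c * b)) - int (?m (b * d))"
    unfolding xy by (rule rat_val_of_int_divide[OF assms(1) nz]) (use ab cd in simp)
  moreover have "?m (a * d + c * b) \<ge> min (?m (a * d)) (?m (c * b))"
    using multiplicity_add_ge[OF _ nz] prime_int_not_dvd_one[OF assms(1)] by simp
  moreover have "?m (b * d) = ?m b + ?m d" "?m (a * d) = ?m a + ?m d" "?m (c * b) = ?m c + ?m b"
    using prime_elem_multiplicity_mult_distrib[of "int p"] assms(1) ab cd by auto
  moreover have "rat_val p x = int (?m a) - int (?m b)" "rat_val p y = int (?m c) - int (?m d)"
    using rat_val_of_int_divide[OF assms(1)] ab cd by auto
  ultimately show ?thesis by linarith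
qed

definition rat_vge :: "nat \<Rightarrow> int \<Rightarrow> rat \<Rightarrow> bool" where
  "rat_vge p K r \<longleftrightarrow> r = 0 \<or> rat_val p r \<ge> K"

lemma rat_vge_zero [simp]: "rat_vge p K 0" by (simp add: rat_vge_def)

lemma rat_vge_add: "prime p \<Longrightarrow> rat_vge p K a \<Longrightarrow> rat_vge p K b \<Longrightarrow> rat_vge p K (a + b)"
  unfolding rat_vge_def using rat_val_add_ge[of p a b] by fastforce

lemma rat_vge_uminus_iff: "prime p \<Longrightarrow> rat_vge p K (- a) \<longleftrightarrow> rat_vge p K a"
  unfolding rat_vge_def using rat_val_minus[of p a] by (cases "a = 0") auto

lemma rat_vge_diff: "prime p \<Longrightarrow> rat_vge p K a \<Longrightarrow> rat_vge p K b \<Longrightarrow> rat_vge p K (a - b)"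
  using rat_vge_add[of p K a "-b"] rat_vge_uminus_iff[of p K b] by simp

lemma rat_vge_mult:
  assumes "prime p" "rat_vge p K a" "rat_vge p L b"
  shows "rat_vge p (K + L) (a * b)"
proof (cases "a = 0 \<or> b = 0")
  case True thus ?thesis by (auto simp: rat_vge_def)
next
  case False
  hence "rat_val p (a * b) = rat_val p a + rat_val p b" using rat_val_mult[OF assms(1)] by blast
  moreover have "rat_val p a \<ge> K" "rat_val p b \<ge> L" using assms(2,3) False unfolding rat_vge_def
    by auto
  ultimately show ?thesis unfolding rat_vge_def by simp
qed

lemma rat_vge_rat_val: "rat_vge p (rat_val p r) r"
  unfolding rat_vge_def by simp

lemma rat_vge_all_imp_zero: "(\<And>K. rat_vge p K r) \<Longrightarrow> r = 0"
  unfolding rat_vge_def by (metis add1_zle_eq less_irrefl)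

lemma rat_val_eq_if_close:
  assumes "prime p" "r \<noteq> 0" "rat_vge p (rat_val p r + 1) (x - r)"
  shows "x \<noteq> 0 \<and> rat_val p x = rat_val p r"
proof -
  have x: "x \<noteq> 0"
  proof
    assume "x = 0"
    hence "rat_vge p (rat_val p r + 1) r" using assms(3) rat_vge_uminus_iff[OF assms(1)]
      by (metis diff_0)
    thus False using assms(2) unfolding rat_vge_def by simp
  qed
  show ?thesis
  proof (cases "x - r = 0")
    case True thus ?thesis using x by simp
  next
    case False
    have d: "rat_val p (x - r) \<ge> rat_val p r + 1" using assms(3) False unfolding rat_vge_def by simp
    have "rat_val p ((x - r) + r) \<ge> min (rat_val p (x - r)) (rat_val p r)"
      using rat_val_add_ge[OF assms(1) False assms(2)] x by simp
    hence ge: "rat_val p x \<ge> rat_val p r" using d by simp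
    have "rat_val p (x + - (x - r)) \<ge> min (rat_val p x) (rat_val p (- (x - r)))"
      using rat_val_add_ge[OF assms(1) x, of "- (x - r)"] False assms(2) by simp
    hence "rat_val p r \<ge> min (rat_val p x) (rat_val p (x - r))"
      using rat_val_minus[OF assms(1) False] by simp
    hence "rat_val p r \<ge> rat_val p x" using d by linarith
    thus ?thesis using ge x by simp
  qed
qed

section \<open>Rational constants in the Cauchy-sequence model of Q_p\<close>

definition pnull :: "nat \<Rightarrow> (nat \<Rightarrow> rat) \<Rightarrow> bool" where
  "pnull p f \<longleftrightarrow> (\<forall>K. eventually (\<lambda>n. rat_vge p K (f n)) sequentially)"

lemma rat_pabs_le_iff_rat_vge:
  assumes "prime p"
  shows "rat_pabs p r \<le> real p powr (- real_of_int K) \<longleftrightarrow> rat_vge p K r"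
proof (cases "r = 0")
  case False
  have "real p > 1" using prime_gt_1_nat assms by simp
  thus ?thesis using False by (simp add: rat_pabs_def rat_vge_def)
qed (simp add: rat_pabs_def rat_vge_def)

lemma ex_prime_powr_less:
  assumes "prime p" "e > 0"
  shows "\<exists>K. real p powr (- real_of_int K) < e"
proof -
  have p1: "real p > 1" using prime_gt_1_nat assms by simp
  obtain n where n: "(1 / real p) ^ n < e"
    using real_arch_pow_inv[OF assms(2), of "1 / real p"] p1 by auto
  have "real p powr (- real_of_int (int n)) = (1 / real p) ^ n"
    using p1 by (simp add: powr_minus powr_realpow power_one_over inverse_eq_divide)
  thus ?thesis using n by (metis)
qed

lemma tendsto_rat_pabs_zero_iff_pnull:
  assumes "prime p"
  shows "((\<lambda>n. rat_pabs p (f n)) \<longlonglongrightarrow> 0) \<longleftrightarrow> pnull p f"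
proof
  assume lim: "(\<lambda>n. rat_pabs p (f n)) \<longlonglongrightarrow> 0"
  show "pnull p f" unfolding pnull_def
  proof
    fix K
    have "real p powr (- real_of_int K) > 0" using prime_gt_1_nat[OF assms] by simp
    hence "eventually (\<lambda>n. rat_pabs p (f n) < real p powr (- real_of_int K)) sequentially"
      using order_tendstoD(2)[OF lim] by blast
    thus "eventually (\<lambda>n. rat_vge p K (f n)) sequentially"
      by (rule eventually_mono) (simp add: rat_pabs_le_iff_rat_vge[OF assms, symmetric])
  qed
next
  assume null: "pnull p f"
  have "rat_pabs p r \<ge> 0" for r by (simp add: rat_pabs_def)
  moreover have "eventually (\<lambda>n. rat_pabs p (f n) < e) sequentially" if e: "e > 0" for e
  proof -
    obtain K where K: "real p powr (- real_of_int K) < e" using ex_prime_powr_less[OF assms e]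
      by blast
    have "eventually (\<lambda>n. rat_vge p K (f n)) sequentially" using null unfolding pnull_def by blast
    thus ?thesis
      by (rule eventually_mono) (meson K rat_pabs_le_iff_rat_vge[OF assms] le_less_trans)
  qed
  ultimately show "(\<lambda>n. rat_pabs p (f n)) \<longlonglongrightarrow> 0"
    by (intro order_tendstoI) (auto intro: less_le_trans always_eventually)
qed

lemma pcauchy_iff_rat_vge:
  assumes "prime p"
  shows "pcauchy p f \<longleftrightarrow> (\<forall>K. \<exists>N. \<forall>m\<ge>N. \<forall>n\<ge>N. rat_vge p K (f m - f n))"
proof
  assume C: "pcauchy p f"
  show "\<forall>K. \<exists>N. \<forall>m\<ge>N. \<forall>n\<ge>N. rat_vge p K (f m - f n)"
  proof
    fix K
    have "real p powr (- real_of_int K) > 0" using prime_gt_1_nat[OF assms] by simp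
    then obtain N where "\<forall>m\<ge>N. \<forall>n\<ge>N. rat_pabs p (f m - f n) < real p powr (- real_of_int K)"
      using C unfolding pcauchy_def by blast
    thus "\<exists>N. \<forall>m\<ge>N. \<forall>n\<ge>N. rat_vge p K (f m - f n)"
      using rat_pabs_le_iff_rat_vge[OF assms] by (meson less_imp_le)
  qed
next
  assume C: "\<forall>K. \<exists>N. \<forall>m\<ge>N. \<forall>n\<ge>N. rat_vge p K (f m - f n)"
  show "pcauchy p f" unfolding pcauchy_def
  proof (intro allI impI)
    fix e :: real assume "e > 0"
    then obtain K where K: "real p powr (- real_of_int K) < e" using ex_prime_powr_less[OF assms]
      by blast
    obtain N where N: "\<forall>m\<ge>N. \<forall>n\<ge>N. rat_vge p K (f m - f n)" using C by blast
    thus "\<exists>N. \<forall>m\<ge>N. \<forall>n\<ge>N. rat_pabs p (f m - f n) < e"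
      using rat_pabs_le_iff_rat_vge[OF assms] K by (meson le_less_trans)
  qed
qed

lemma pnull_add:
  assumes "prime p" "pnull p f" "pnull p g"
  shows "pnull p (\<lambda>n. f n + g n)"
  unfolding pnull_def
proof
  fix K
  have "eventually (\<lambda>n. rat_vge p K (f n)) sequentially"
    and "eventually (\<lambda>n. rat_vge p K (g n)) sequentially"
    using assms(2,3) unfolding pnull_def by blast+
  thus "eventually (\<lambda>n. rat_vge p K (f n + g n)) sequentially"
    by (rule eventually_elim2) (rule rat_vge_add[OF assms(1)])
qed

lemma pnull_uminus_iff:
  assumes "prime p"
  shows "pnull p (\<lambda>n. - f n) \<longleftrightarrow> pnull p f"
  unfolding pnull_def using rat_vge_uminus_iff[OF assms] by simp

lemma pnull_mult_left:
  assumes "prime p" "pnull p f"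
  shows "pnull p (\<lambda>n. c * f n)"
  unfolding pnull_def
proof
  fix K
  have "eventually (\<lambda>n. rat_vge p (K - rat_val p c) (f n)) sequentially"
    using assms(2) unfolding pnull_def by blast
  thus "eventually (\<lambda>n. rat_vge p K (c * f n)) sequentially"
  proof (rule eventually_mono)
    fix n assume "rat_vge p (K - rat_val p c) (f n)"
    from rat_vge_mult[OF assms(1) rat_vge_rat_val[of p c] this] show "rat_vge p K (c * f n)" by simp
  qed
qed

lemma pnull_mult:
  assumes "prime p" "pnull p f" "pnull p g"
  shows "pnull p (\<lambda>n. f n * g n)"
  unfolding pnull_def
proof
  fix K
  have "eventually (\<lambda>n. rat_vge p K (f n)) sequentially"
    and "eventually (\<lambda>n. rat_vge p 0 (g n)) sequentially"
    using assms(2,3) unfolding pnull_def by blast+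
  thus "eventually (\<lambda>n. rat_vge p K (f n * g n)) sequentially"
    by (rule eventually_elim2) (use rat_vge_mult[OF assms(1), of K _ 0] in simp)
qed

lemma pnull_const_iff: "pnull p (\<lambda>_. c) \<longleftrightarrow> c = 0"
proof
  assume "pnull p (\<lambda>_. c)"
  hence "\<And>K. rat_vge p K c" unfolding pnull_def eventually_sequentially by blast
  thus "c = 0" by (rule rat_vge_all_imp_zero)
qed (simp add: pnull_def)

lemma pcauchy_if_pnull_diff:
  assumes "prime p" "pnull p (\<lambda>n. f n - r)"
  shows "pcauchy p f"
  unfolding pcauchy_iff_rat_vge[OF assms(1)]
proof
  fix K
  obtain N where N: "\<forall>n\<ge>N. rat_vge p K (f n - r)"
    using assms(2) unfolding pnull_def eventually_sequentially by blast
  have "\<forall>m\<ge>N. \<forall>n\<ge>N. rat_vge p K ((f m - r) - (f n - r))" using N rat_vge_diff[OF assms(1)] by blast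
  thus "\<exists>N. \<forall>m\<ge>N. \<forall>n\<ge>N. rat_vge p K (f m - f n)" by auto
qed

lemma pcauchy_const: "prime p \<Longrightarrow> pcauchy p (\<lambda>_. c)"
  by (rule pcauchy_if_pnull_diff[of p _ c]) (simp_all add: pnull_def)

lemma pequiv_iff:
  assumes "prime p"
  shows "(f, g) \<in> pequiv p \<longleftrightarrow> pcauchy p f \<and> pcauchy p g \<and> pnull p (\<lambda>n. f n - g n)"
  unfolding pequiv_def using tendsto_rat_pabs_zero_iff_pnull[OF assms, of "\<lambda>n. f n - g n"] by simp

lemma equiv_pequiv:
  assumes "prime p"
  shows "equiv {f. pcauchy p f} (pequiv p)"
proof (rule equivI)
  show "pequiv p \<subseteq> {f. pcauchy p f} \<times> {f. pcauchy p f}"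
    unfolding pequiv_def by auto
  show "refl_on {f. pcauchy p f} (pequiv p)"
    unfolding refl_on_def pequiv_iff[OF assms] by (simp add: pnull_def)
  show "sym (pequiv p)"
  proof (rule symI)
    fix f g assume "(f, g) \<in> pequiv p"
    hence h: "pcauchy p f" "pcauchy p g" "pnull p (\<lambda>n. f n - g n)" using pequiv_iff[OF assms]
      by auto
    have "(\<lambda>n. g n - f n) = (\<lambda>n. - (f n - g n))" by auto
    hence "pnull p (\<lambda>n. g n - f n)" using h(3) pnull_uminus_iff[OF assms, of "\<lambda>n. f n - g n"]
      by simp
    thus "(g, f) \<in> pequiv p" using h pequiv_iff[OF assms] by auto
  qed
  show "trans (pequiv p)"
  proof (rule transI)
    fix f g h assume "(f, g) \<in> pequiv p" "(g, h) \<in> pequiv p"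
    hence a: "pcauchy p f" "pcauchy p h" "pnull p (\<lambda>n. f n - g n)" "pnull p (\<lambda>n. g n - h n)"
      using pequiv_iff[OF assms] by auto
    have "pnull p (\<lambda>n. (f n - g n) + (g n - h n))" by (rule pnull_add[OF assms a(3,4)])
    hence "pnull p (\<lambda>n. f n - h n)" by simp
    thus "(f, h) \<in> pequiv p" using a pequiv_iff[OF assms] by auto
  qed
qed

lemma pnull_qrep_qof_rat:
  assumes "prime p"
  shows "pnull p (\<lambda>n. qrep (qof_rat p r) n - r)"
proof -
  have e: "equiv {f. pcauchy p f} (pequiv p)" by (rule equiv_pequiv[OF assms])
  have c: "(\<lambda>_. r) \<in> {f. pcauchy p f}" using pcauchy_const[OF assms] by simp
  have "(\<lambda>_. r) \<in> qof_rat p r" unfolding qof_rat_def qcls_def by (rule equiv_class_self[OF e c])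
  hence "qrep (qof_rat p r) \<in> qof_rat p r" unfolding qrep_def
    by (rule someI[where P="\<lambda>f. f \<in> qof_rat p r"])
  hence "((\<lambda>_. r), qrep (qof_rat p r)) \<in> pequiv p" unfolding qof_rat_def qcls_def by simp
  hence "pnull p (\<lambda>n. r - qrep (qof_rat p r) n)" using pequiv_iff[OF assms] by auto
  thus ?thesis using pnull_uminus_iff[OF assms, of "\<lambda>n. r - qrep (qof_rat p r) n"] by simp
qed

lemma qcls_eq_qof_rat:
  assumes "prime p" "pnull p (\<lambda>n. f n - r)"
  shows "qcls p f = qof_rat p r"
  unfolding qof_rat_def qcls_def
  by (rule equiv_class_eq[OF equiv_pequiv[OF assms(1)]])
     (simp add: pequiv_iff[OF assms(1)] pcauchy_if_pnull_diff[OF assms] pcauchy_const[OF assms(1)]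
        assms(2))

lemma qof_rat_inj:
  assumes "prime p" "qof_rat p a = qof_rat p b"
  shows "a = b"
proof -
  have "((\<lambda>_. a), (\<lambda>_. b)) \<in> pequiv p"
    using eq_equiv_class[OF assms(2)[unfolded qof_rat_def qcls_def] equiv_pequiv[OF assms(1)]]
      pcauchy_const[OF assms(1)] by simp
  hence "pnull p (\<lambda>_. a - b)" using pequiv_iff[OF assms(1)] by auto
  thus ?thesis using pnull_const_iff by simp
qed

lemma qof_rat_eq_iff:
  assumes "prime p" shows "qof_rat p a = qof_rat p b \<longleftrightarrow> a = b"
  using qof_rat_inj[OF assms, of a b] by auto

lemma qof_rat_in_Qp: "prime p \<Longrightarrow> qof_rat p r \<in> Qp p"
  unfolding Qp_def qof_rat_def qcls_def by (rule quotientI) (simp add: pcauchy_const)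

lemma qadd_qof_rat:
  assumes "prime p"
  shows "qadd p (qof_rat p a) (qof_rat p b) = qof_rat p (a + b)"
  unfolding qadd_def
proof (rule qcls_eq_qof_rat[OF assms])
  have "pnull p (\<lambda>n. (qrep (qof_rat p a) n - a) + (qrep (qof_rat p b) n - b))"
    by (rule pnull_add[OF assms pnull_qrep_qof_rat[OF assms] pnull_qrep_qof_rat[OF assms]])
  thus "pnull p (\<lambda>n. qrep (qof_rat p a) n + qrep (qof_rat p b) n - (a + b))"
    by (simp add: algebra_simps)
qed

lemma qneg_qof_rat:
  assumes "prime p"
  shows "qneg p (qof_rat p a) = qof_rat p (- a)"
  unfolding qneg_def
proof (rule qcls_eq_qof_rat[OF assms])
  have "pnull p (\<lambda>n. - (qrep (qof_rat p a) n - a))"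
    using pnull_uminus_iff[OF assms, of "\<lambda>n. qrep (qof_rat p a) n - a"] pnull_qrep_qof_rat[OF assms]
    by simp
  thus "pnull p (\<lambda>n. - qrep (qof_rat p a) n - - a)"
    by (simp add: algebra_simps)
qed

lemma qsub_qof_rat:
  assumes "prime p"
  shows "qsub p (qof_rat p a) (qof_rat p b) = qof_rat p (a - b)"
  unfolding qsub_def qneg_qof_rat[OF assms] qadd_qof_rat[OF assms] by simp

lemma qmul_qof_rat:
  assumes "prime p"
  shows "qmul p (qof_rat p a) (qof_rat p b) = qof_rat p (a * b)"
  unfolding qmul_def
proof (rule qcls_eq_qof_rat[OF assms])
  let ?f = "qrep (qof_rat p a)" and ?g = "qrep (qof_rat p b)"
  have f: "pnull p (\<lambda>n. ?f n - a)" and g: "pnull p (\<lambda>n. ?g n - b)"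
    using pnull_qrep_qof_rat[OF assms] by auto
  have "pnull p (\<lambda>n. (?f n - a) * (?g n - b) + (b * (?f n - a) + a * (?g n - b)))"
    by (intro pnull_add[OF assms] pnull_mult[OF assms] pnull_mult_left[OF assms] f g)
  thus "pnull p (\<lambda>n. ?f n * ?g n - a * b)"
    by (simp add: algebra_simps)
qed

text \<open>Once f n is close enough to a it has the same valuation v, and
  1/f n - 1/a = (a - f n) / (f n a) has valuation at least v(a - f n) - 2 v.\<close>
lemma qinv_qof_rat:
  assumes "prime p" "a \<noteq> 0"
  shows "qinv p (qof_rat p a) = qof_rat p (inverse a)"
  unfolding qinv_def
proof (rule qcls_eq_qof_rat[OF assms(1)])
  let ?f = "qrep (qof_rat p a)" and ?v = "rat_val p a"
  have f: "pnull p (\<lambda>n. ?f n - a)" by (rule pnull_qrep_qof_rat[OF assms(1)])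
  show "pnull p (\<lambda>n. inverse (?f n) - inverse a)" unfolding pnull_def
  proof
    fix K
    have "eventually (\<lambda>n. rat_vge p (K + 2 * ?v) (?f n - a)) sequentially"
      and "eventually (\<lambda>n. rat_vge p (?v + 1) (?f n - a)) sequentially"
      using f unfolding pnull_def by blast+
    thus "eventually (\<lambda>n. rat_vge p K (inverse (?f n) - inverse a)) sequentially"
    proof (rule eventually_elim2)
      fix n
      assume far: "rat_vge p (K + 2 * ?v) (?f n - a)" and near: "rat_vge p (?v + 1) (?f n - a)"
      have fn: "?f n \<noteq> 0" "rat_val p (?f n) = ?v"
        using rat_val_eq_if_close[OF assms(1,2) near] by auto
      have "rat_vge p (K + 2 * ?v) (- (?f n - a))"
        using far rat_vge_uminus_iff[OF assms(1)] by blast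
      moreover have "rat_vge p (- ?v) (inverse (?f n))" "rat_vge p (- ?v) (inverse a)"
        using rat_val_inverse[OF assms(1)] fn assms(2) unfolding rat_vge_def by simp_all
      ultimately have "rat_vge p ((K + 2 * ?v) + (- ?v) + (- ?v))
                               (- (?f n - a) * inverse (?f n) * inverse a)"
        by (intro rat_vge_mult[OF assms(1)])
      moreover have "- (?f n - a) * inverse (?f n) * inverse a = inverse (?f n) - inverse a"
        using fn(1) assms(2) by (simp add: field_simps)
      ultimately show "rat_vge p K (inverse (?f n) - inverse a)" by simp
    qed
  qed
qed

lemma qdiv_qof_rat:
  assumes "prime p" "b \<noteq> 0"
  shows "qdiv p (qof_rat p a) (qof_rat p b) = qof_rat p (a / b)"
  unfolding qdiv_def qinv_qof_rat[OF assms] qmul_qof_rat[OF assms(1)] by (simp add: divide_inverse)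

lemma qpow_qof_rat:
  assumes "prime p"
  shows "qpow p (qof_rat p a) n = qof_rat p (a ^ n)"
proof (induction n)
  case 0 thus ?case by (simp add: qpow_def qone_def)
next
  case (Suc n)
  have "qpow p (qof_rat p a) (Suc n) = qmul p (qof_rat p a) (qpow p (qof_rat p a) n)"
    by (simp add: qpow_def)
  thus ?case using Suc qmul_qof_rat[OF assms] by simp
qed

lemma qpowi_qof_rat:
  assumes "prime p" "a \<noteq> 0"
  shows "qpowi p (qof_rat p a) k = qof_rat p (a powi k)"
proof (cases "k \<ge> 0")
  case True thus ?thesis by (simp add: qpowi_def qpow_qof_rat[OF assms(1)] power_int_def)
next
  case False
  have "a ^ nat (- k) \<noteq> 0" using assms by simp
  thus ?thesis using False
    by (simp add: qpowi_def qpow_qof_rat[OF assms(1)] qinv_qof_rat[OF assms(1)] power_int_def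
        power_inverse)
qed

lemma the_eventually_eq_sequentially:
  assumes "eventually (\<lambda>n. f n = z) sequentially"
  shows "(THE z. eventually (\<lambda>n. f n = z) sequentially) = z"
proof (rule the_equality)
  fix v assume "eventually (\<lambda>n. f n = v) sequentially"
  hence "eventually (\<lambda>n. f n = v \<and> f n = z) sequentially" using assms by (rule eventually_conj)
  thus "v = z" unfolding eventually_sequentially by auto
qed (rule assms)

lemma qval_qof_rat:
  assumes "prime p" "r \<noteq> 0"
  shows "qval p (qof_rat p r) = rat_val p r"
  unfolding qval_def
proof (rule the_eventually_eq_sequentially)
  have "eventually (\<lambda>n. rat_vge p (rat_val p r + 1) (qrep (qof_rat p r) n - r)) sequentially"
    using pnull_qrep_qof_rat[OF assms(1)] unfolding pnull_def by blast
  thus "eventually (\<lambda>n. rat_val p (qrep (qof_rat p r) n) = rat_val p r) sequentially"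
    by (rule eventually_mono) (use rat_val_eq_if_close[OF assms] in blast)
qed

section \<open>Residues and Hilbert symbols of rational numbers\<close>

lemma rat_vge_one_of_int_divide_iff:
  assumes "prime p" "d \<noteq> 0" "\<not> int p dvd d"
  shows "rat_vge p 1 (of_int c / of_int d) \<longleftrightarrow> int p dvd c"
proof (cases "c = 0")
  case False
  have "\<not> is_unit (int p)" using prime_int_not_dvd_one[OF assms(1)] by simp
  moreover have "multiplicity (int p) d = 0" using assms(3) not_dvd_imp_multiplicity_0 by blast
  ultimately show ?thesis
    using rat_val_of_int_divide[OF assms(1) False assms(2)] False assms(2)
    by (auto simp: rat_vge_def multiplicity_gt_zero_iff[symmetric] Suc_le_eq)
qed (simp add: rat_vge_def)

lemma rat_vge_of_int: "prime p \<Longrightarrow> rat_vge p 0 (of_int z)"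
  using rat_val_of_int_divide[of p z 1] by (cases "z = 0") (auto simp: rat_vge_def)

lemma quotient_of_denom_not_dvd:
  assumes "prime p" "rat_vge p 0 x" "quotient_of x = (c, d)"
  shows "\<not> int p dvd d"
proof
  assume pd: "int p dvd d"
  have "coprime c d" using quotient_of_coprime[OF assms(3)] .
  hence "\<not> int p dvd c" using pd assms(1) by (metis coprime_common_divisor not_prime_unit prime_nat_int_transfer)
  hence "c \<noteq> 0" "multiplicity (int p) c = 0" using not_dvd_imp_multiplicity_0 by auto
  moreover have "d > 0" using quotient_of_denom_pos[OF assms(3)] .
  moreover have "multiplicity (int p) d > 0"
    using pd \<open>d > 0\<close> prime_int_not_dvd_one[OF assms(1)] multiplicity_gt_zero_iff[of d "int p"] by simp
  moreover have "x = of_int c / of_int d" by (rule quotient_of_div[OF assms(3)])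
  ultimately show False
    using assms(2) rat_val_of_int_divide[OF assms(1), of c d] by (simp add: rat_vge_def)
qed

lemma rat_res_eqI:
  assumes "prime p" "0 \<le> z" "z < int p" "rat_vge p 1 (x - of_int z)"
  shows "rat_res p x = z"
proof -
  have pi: "prime (int p)" using assms(1) by simp
  obtain c d where q: "quotient_of x = (c, d)" by (cases "quotient_of x")
  have d0: "d > 0" using quotient_of_denom_pos[OF q] .
  have "rat_vge p 0 ((x - of_int z) + of_int z)"
    using assms(4) rat_vge_of_int[OF assms(1)] by (intro rat_vge_add[OF assms(1)]) (auto simp: rat_vge_def)
  hence nd: "\<not> int p dvd d" using quotient_of_denom_not_dvd[OF assms(1) _ q] by simp
  have "x - of_int z = of_int (c - z * d) / of_int d"
    using quotient_of_div[OF q] d0 by (simp add: field_simps)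
  hence "int p dvd c - z * d"
    using assms(4) rat_vge_one_of_int_divide_iff[OF assms(1) _ nd, of "c - z * d"] d0 by simp
  hence cz: "[c = z * d] (mod int p)" by (simp add: cong_iff_dvd_diff)
  have "(THE z'. 0 \<le> z' \<and> z' < int p \<and> [c = z' * d] (mod int p)) = z"
  proof (rule the_equality)
    fix z' assume z': "0 \<le> z' \<and> z' < int p \<and> [c = z' * d] (mod int p)"
    hence "[z' * d = z * d] (mod int p)" using cz by (metis cong_sym cong_trans)
    hence "[z' = z] (mod int p)"
      using nd pi by (metis cong_mult_rcancel coprime_commute prime_imp_coprime)
    thus "z' = z" using z' assms(2,3) cong_less_imp_eq_int by metis
  qed (use assms cz in simp)
  thus ?thesis by (simp add: rat_res_def q)
qed

lemma omega_qof_rat: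
  assumes "prime p" "r \<noteq> 0" "rat_val p r = 0" "0 \<le> z" "z < int p" "rat_vge p 1 (r - of_int z)"
  shows "omega p (qof_rat p r) = z"
proof -
  have unit_part:
    "qmul p (qof_rat p r) (qof_rat p (of_nat p powi (- qval p (qof_rat p r)))) = qof_rat p r"
    using qval_qof_rat[OF assms(1,2)] assms(3) qmul_qof_rat[OF assms(1)] by simp
  have "eventually (\<lambda>n. rat_vge p 1 (qrep (qof_rat p r) n - r)) sequentially"
    using pnull_qrep_qof_rat[OF assms(1)] unfolding pnull_def by blast
  hence "eventually (\<lambda>n. rat_res p (qrep (qof_rat p r) n) = z) sequentially"
    by (rule eventually_mono)
       (use rat_res_eqI[OF assms(1,4,5)] rat_vge_add[OF assms(1) _ assms(6)] in fastforce)
  thus ?thesis unfolding omega_def Let_def unit_part by (rule the_eventually_eq_sequentially)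
qed

lemma hilbert_qof_rat:
  fixes p :: nat and a b :: rat
  defines "u \<equiv> (-1) powi (rat_val p a * rat_val p b) * b powi (rat_val p a) / a powi (rat_val p b)"
  assumes "prime p" "a \<noteq> 0" "b \<noteq> 0" "rat_val p u = 0" "0 \<le> z" "z < int p"
    "rat_vge p 1 (u - of_int z)"
  shows "hilbert p (qof_rat p a) (qof_rat p b) =
           (if (z ^ ((p - 1) div 2)) mod int p = 1 then 1 else -1)"
proof -
  have "qpowi p (qof_rat p c) k = qof_rat p (c powi k)" if "c \<noteq> 0" for c k
    by (rule qpowi_qof_rat[OF assms(2) that])
  hence "qdiv p (qmul p (qpowi p (qof_rat p (-1)) (qval p (qof_rat p a) * qval p (qof_rat p b)))
                       (qpowi p (qof_rat p b) (qval p (qof_rat p a))))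
               (qpowi p (qof_rat p a) (qval p (qof_rat p b))) = qof_rat p u"
    using assms(2-4) by (simp add: u_def qval_qof_rat qmul_qof_rat qdiv_qof_rat)
  moreover have "u \<noteq> 0" using assms(3,4) by (simp add: u_def)
  ultimately show ?thesis
    unfolding hilbert_def Let_def using omega_qof_rat[OF assms(2) _ assms(5-8)] by simp
qed

lemma hilbert_qof_rat_eq_1:
  assumes "prime p" "a \<noteq> 0" "b \<noteq> 0"
    "(-1) powi (rat_val p a * rat_val p b) * b powi (rat_val p a) / a powi (rat_val p b) = 1"
  shows "hilbert p (qof_rat p a) (qof_rat p b) = 1"
  using hilbert_qof_rat[OF assms(1-3), of 1] assms(4) prime_gt_1_nat[OF assms(1)]
  by (simp add: rat_val_one[OF assms(1)])

lemma hilbert_one_left: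
  assumes "prime p" "b \<noteq> 0"
  shows "hilbert p (qof_rat p 1) (qof_rat p b) = 1"
  using hilbert_qof_rat_eq_1[OF assms(1), of 1 b] assms(2) by (simp add: rat_val_one[OF assms(1)])

lemma hilbert_one_right:
  assumes "prime p" "a \<noteq> 0"
  shows "hilbert p (qof_rat p a) (qof_rat p 1) = 1"
  using hilbert_qof_rat_eq_1[OF assms(1), of a 1] assms(2) by (simp add: rat_val_one[OF assms(1)])

lemma hilbert_unit_self:
  assumes "prime p" "s \<noteq> 0" "rat_val p s = 0"
  shows "hilbert p (qof_rat p s) (qof_rat p s) = 1"
  using hilbert_qof_rat_eq_1[OF assms(1,2,2)] assms(3) by simp

lemma hilbert_unit_prime_mult:
  assumes "prime p" "\<not> int p dvd G"
  shows "hilbert p (qof_rat p (1 / of_int G)) (qof_rat p (of_nat p / of_int G)) =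
           (if ((G mod int p) ^ ((p - 1) div 2)) mod int p = 1 then 1 else -1)"
proof -
  have G0: "G \<noteq> 0" and p0: "p \<noteq> 0" using assms prime_gt_0_nat by auto
  have vG: "rat_val p (of_int G) = 0" by (rule rat_val_of_int_eq_0[OF assms])
  have vs: "rat_val p (1 / of_int G) = 0"
    using rat_val_inverse[OF assms(1), of "of_int G"] vG G0 by (simp add: divide_inverse)
  have vp: "rat_val p (of_nat p) = 1" using rat_val_prime_power[OF assms(1), of 1] by simp
  have vps: "rat_val p (of_nat p / of_int G) = 1"
    using rat_val_mult[OF assms(1), of "of_nat p" "1 / of_int G"] vs vp p0 G0 by simp
  have "int p dvd G - G mod int p" by (simp add: minus_mod_eq_mult_div)
  hence "rat_vge p 1 (of_int G - of_int (G mod int p))"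
    using rat_vge_one_of_int_divide_iff[OF assms(1), of 1 "G - G mod int p"]
      prime_int_not_dvd_one[OF assms(1)] by simp
  thus ?thesis
    using hilbert_qof_rat[OF assms(1), of "1 / of_int G" "of_nat p / of_int G" "G mod int p"]
      vs vps vG G0 p0 by (simp add: pos_mod_sign)
qed

lemma hilbert_cases: "hilbert p x y = 1 \<or> hilbert p x y = -1"
  unfolding hilbert_def Let_def by auto

section \<open>Rational points of the metaplectic cover\<close>

type_synonym rmat = "rat \<times> rat \<times> rat \<times> rat"

definition mat2_of_rat :: "nat \<Rightarrow> rmat \<Rightarrow> mat2" where
  "mat2_of_rat p A =
     (case A of (a, b, c, d) \<Rightarrow> (qof_rat p a, qof_rat p b, qof_rat p c, qof_rat p d))"

definition rmat_mul :: "rmat \<Rightarrow> rmat \<Rightarrow> rmat" where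
  "rmat_mul A B = (case A of (a, b, c, d) \<Rightarrow> case B of (a', b', c', d') \<Rightarrow>
     (a * a' + b * c', a * b' + b * d', c * a' + d * c', c * b' + d * d'))"

definition rmat_det :: "rmat \<Rightarrow> rat" where
  "rmat_det A = (case A of (a, b, c, d) \<Rightarrow> a * d - b * c)"

definition rmat_c :: "rmat \<Rightarrow> rat" where
  "rmat_c A = (case A of (a, b, c, d) \<Rightarrow> if c \<noteq> 0 then c else d)"

definition rat_sigma :: "nat \<Rightarrow> rmat \<Rightarrow> rmat \<Rightarrow> int" where
  "rat_sigma p A B = hilbert p (qof_rat p (rmat_c (rmat_mul A B) / rmat_c A))
                               (qof_rat p (rmat_det A * rmat_c (rmat_mul A B) / rmat_c B))"

lemma rmat_mul_simps:
  "rmat_mul (a, b, c, d) (a', b', c', d') =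
     (a * a' + b * c', a * b' + b * d', c * a' + d * c', c * b' + d * d')"
  by (simp add: rmat_mul_def)

lemma rmat_det_simps: "rmat_det (a, b, c, d) = a * d - b * c"
  by (simp add: rmat_det_def)

lemma rmat_det_mul: "rmat_det (rmat_mul A B) = rmat_det A * rmat_det B"
  by (cases A rule: prod_cases4; cases B rule: prod_cases4)
     (simp add: rmat_det_def rmat_mul_def algebra_simps)

lemma rmat_c_neq_0: "rmat_det A \<noteq> 0 \<Longrightarrow> rmat_c A \<noteq> 0"
  by (cases A rule: prod_cases4) (auto simp: rmat_det_def rmat_c_def)

lemma mmul_mat2_of_rat:
  assumes "prime p"
  shows "mmul p (mat2_of_rat p A) (mat2_of_rat p B) = mat2_of_rat p (rmat_mul A B)"
  by (cases A rule: prod_cases4; cases B rule: prod_cases4)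
     (simp add: mmul_def mat2_of_rat_def rmat_mul_def qmul_qof_rat[OF assms] qadd_qof_rat[OF assms])

lemma mdet_mat2_of_rat:
  assumes "prime p"
  shows "mdet p (mat2_of_rat p A) = qof_rat p (rmat_det A)"
  by (cases A rule: prod_cases4)
     (simp add: mdet_def mat2_of_rat_def rmat_det_def qmul_qof_rat[OF assms] qsub_qof_rat[OF assms])

lemma cfun_mat2_of_rat:
  assumes "prime p"
  shows "cfun p (mat2_of_rat p A) = qof_rat p (rmat_c A)"
  by (cases A rule: prod_cases4)
     (simp add: cfun_def mat2_of_rat_def rmat_c_def qzero_def qof_rat_eq_iff[OF assms])

lemma mat2_of_rat_in_GL2:
  assumes "prime p" "rmat_det A \<noteq> 0"
  shows "mat2_of_rat p A \<in> GL2 p"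
proof -
  have "mdet p (mat2_of_rat p A) \<noteq> qzero p"
    using assms by (simp add: mdet_mat2_of_rat qzero_def qof_rat_eq_iff)
  thus ?thesis
    using qof_rat_in_Qp[OF assms(1)]
    by (cases A rule: prod_cases4) (simp add: GL2_def mat2_of_rat_def)
qed

lemma mat2_of_rat_in_Gt:
  assumes "prime p" "rmat_det A \<noteq> 0" "z = 1 \<or> z = -1"
  shows "(mat2_of_rat p A, z) \<in> Gt p"
  using mat2_of_rat_in_GL2[OF assms(1,2)] assms(3) unfolding Gt_def by auto

lemma gt_mult_mat2_of_rat:
  assumes "prime p" "rmat_c A \<noteq> 0" "rmat_c B \<noteq> 0"
  shows "gt_mult p (mat2_of_rat p A, z) (mat2_of_rat p B, w) =
           (mat2_of_rat p (rmat_mul A B), z * w * rat_sigma p A B)"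
  using assms
  by (simp add: gt_mult_def sigma_def rat_sigma_def mmul_mat2_of_rat cfun_mat2_of_rat
      mdet_mat2_of_rat qmul_qof_rat qdiv_qof_rat)

lemma mone_eq_mat2_of_rat: "mone p = mat2_of_rat p (1, 0, 0, 1)"
  by (simp add: mone_def mat2_of_rat_def qone_def qzero_def)

lemma gt_one_eq_mat2_of_rat: "gt_one p = (mat2_of_rat p (1, 0, 0, 1), 1)"
  by (simp add: gt_one_def mone_eq_mat2_of_rat)

lemma gt_mult_mone_minus_one:
  assumes "prime p" "rmat_det A \<noteq> 0"
  shows "gt_mult p (mat2_of_rat p A, z) (mone p, -1) = (mat2_of_rat p A, - z)"
proof -
  have "rmat_mul A (1, 0, 0, 1) = A" by (cases A rule: prod_cases4) (simp add: rmat_mul_simps)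
  moreover have "rmat_det A * rmat_c A \<noteq> 0" using assms(2) rmat_c_neq_0 by simp
  ultimately have "rat_sigma p A (1, 0, 0, 1) = 1"
    using rmat_c_neq_0[OF assms(2)] hilbert_one_left[OF assms(1)]
    by (simp add: rat_sigma_def rmat_c_def)
  thus ?thesis
    using gt_mult_mat2_of_rat[OF assms(1) rmat_c_neq_0[OF assms(2)], of "(1, 0, 0, 1)"]
      \<open>rmat_mul A (1, 0, 0, 1) = A\<close> by (simp add: mone_eq_mat2_of_rat rmat_c_def)
qed

lemma gt_mult_mat2_of_rat_right_inverse:
  assumes "prime p" "rmat_det A \<noteq> 0"
  obtains y where "y \<in> Gt p" "gt_mult p (mat2_of_rat p A, 1) y = gt_one p"
proof -
  obtain a b c d where A: "A = (a, b, c, d)" by (cases A rule: prod_cases4)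
  define \<Delta> where "\<Delta> = rmat_det A"
  define B where "B = (d / \<Delta>, - b / \<Delta>, - c / \<Delta>, a / \<Delta>)"
  have \<Delta>: "\<Delta> = a * d - b * c" "\<Delta> \<noteq> 0" using assms(2) by (simp_all add: \<Delta>_def A rmat_det_simps)
  have AB: "rmat_mul A B = (1, 0, 0, 1)"
    using \<Delta> by (simp add: A B_def rmat_mul_simps field_simps)
  have "rmat_det A * rmat_det B = 1" using AB rmat_det_mul[of A B] by (simp add: rmat_det_simps)
  hence detB: "rmat_det B \<noteq> 0" by auto
  define t where "t = rat_sigma p A B"
  have t: "t = 1 \<or> t = -1" unfolding t_def rat_sigma_def by (rule hilbert_cases)
  show ?thesis
  proof
    show "(mat2_of_rat p B, t) \<in> Gt p" by (rule mat2_of_rat_in_Gt[OF assms(1) detB t])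
    have "t * t = 1" using t by auto
    thus "gt_mult p (mat2_of_rat p A, 1) (mat2_of_rat p B, t) = gt_one p"
      using gt_mult_mat2_of_rat[OF assms(1) rmat_c_neq_0[OF assms(2)] rmat_c_neq_0[OF detB]]
      by (simp add: AB t_def gt_one_eq_mat2_of_rat)
  qed
qed

lemma vge_qof_rat:
  assumes "prime p" "rat_vge p (int n) r"
  shows "vge p (qof_rat p r) n"
  using assms qval_qof_rat[OF assms(1)]
  by (cases "r = 0") (auto simp: vge_def qzero_def rat_vge_def)

lemma mat2_of_rat_in_Kn:
  assumes "prime p" "rmat_det (a, b, c, d) \<noteq> 0" "rat_vge p (int n) (a - 1)" "rat_vge p (int n) b"
    "rat_vge p (int n) c" "rat_vge p (int n) (d - 1)"
  shows "mat2_of_rat p (a, b, c, d) \<in> Kn p n"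
  using mat2_of_rat_in_GL2[OF assms(1,2)] vge_qof_rat[OF assms(1)] assms(3-6)
  by (simp add: Kn_def mat2_of_rat_def qone_def qsub_qof_rat[OF assms(1)])

lemma vge_antimono: "vge p x m \<Longrightarrow> n \<le> m \<Longrightarrow> vge p x n"
  unfolding vge_def by auto

lemma Kn_antimono: "n \<le> m \<Longrightarrow> Kn p m \<subseteq> Kn p n"
  unfolding Kn_def by (blast intro: vge_antimono)

section \<open>Smooth genuine representations\<close>

lemma mat_eq_1_if_fixes_axes:
  fixes A :: "'a::field ^'n ^'n"
  assumes "\<And>i. A *v axis i 1 = axis i 1"
  shows "A = mat 1"
proof -
  have "(A *v axis j 1) $ i = A $ i $ j" for i j
    by (simp add: matrix_vector_mult_def axis_def if_distrib if_distribR sum.delta'[OF finite]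
        cong: if_cong)
  thus ?thesis using assms by (simp add: vec_eq_iff mat_def axis_def)
qed

lemma smooth_rep_trivial_on_Kn:
  fixes \<rho> :: "mat2 \<times> int \<Rightarrow> 'k::field ^'n::finite ^'n"
  assumes "is_smooth p \<rho>"
  obtains N where "\<And>g. g \<in> Kn p N \<Longrightarrow> \<rho> (g, 1) = mat 1"
proof -
  have "\<forall>i. \<exists>n. \<forall>g\<in>Kn p n. \<rho> (g, 1) *v axis i (1::'k) = axis i 1"
    using assms unfolding is_smooth_def by blast
  then obtain n where n: "\<And>i. \<forall>g\<in>Kn p (n i). \<rho> (g, 1) *v axis i (1::'k) = axis i 1"
    by metis
  have "\<rho> (g, 1) = mat 1" if g: "g \<in> Kn p (Max (range n))" for g
  proof (rule mat_eq_1_if_fixes_axes)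
    fix i
    have "g \<in> Kn p (n i)" using g Kn_antimono[of "n i" "Max (range n)"] by auto
    thus "\<rho> (g, 1) *v axis i 1 = axis i 1" using n by blast
  qed
  thus ?thesis using that by blast
qed

lemma rep_mult_mat2_of_rat:
  assumes "prime p" "is_rep p \<rho>" "rmat_det A \<noteq> 0" "rmat_det B \<noteq> 0"
  shows "\<rho> (mat2_of_rat p (rmat_mul A B), rat_sigma p A B) =
           \<rho> (mat2_of_rat p A, 1) ** \<rho> (mat2_of_rat p B, 1)"
proof -
  have "(mat2_of_rat p A, 1) \<in> Gt p" "(mat2_of_rat p B, 1) \<in> Gt p"
    using mat2_of_rat_in_Gt[OF assms(1)] assms(3,4) by auto
  thus ?thesis
    using assms(2)
      gt_mult_mat2_of_rat[OF assms(1) rmat_c_neq_0[OF assms(3)] rmat_c_neq_0[OF assms(4)], of 1 1]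
    unfolding is_rep_def by (metis mult_1)
qed

text \<open>Conjugation by diag(b p^-N, 1) moves the upper unipotent element with entry p^N of K_N
  to the one with entry b; the cocycle is trivial on all three products involved.\<close>
lemma rep_upper_unipotent_eq_1:
  assumes "prime p" "is_rep p \<rho>" "\<And>g. g \<in> Kn p N \<Longrightarrow> \<rho> (g, 1) = mat 1"
  shows "\<rho> (mat2_of_rat p (1, b, 0, 1), 1) = mat 1"
proof (cases "b = 0")
  case True
  thus ?thesis using assms(2) by (simp add: is_rep_def gt_one_eq_mat2_of_rat)
next
  case False
  define y :: rat where "y = of_nat p ^ N"
  define e where "e = b / y"
  have y: "y \<noteq> 0" and e: "e \<noteq> 0" and ey: "e * y = b"
    using prime_gt_0_nat[OF assms(1)] False by (simp_all add: y_def e_def)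
  let ?D = "(e, 0, 0, 1)" and ?X = "(1, y, 0, 1)" and ?E = "(1 / e, 0, 0, 1)"
  have sign: "rat_sigma p ?D ?X = 1" "rat_sigma p (e, b, 0, 1) ?E = 1" "rat_sigma p ?D ?E = 1"
    using hilbert_one_left[OF assms(1) e] e ey
    by (simp_all add: rat_sigma_def rmat_mul_simps rmat_det_simps rmat_c_def)
  have dets: "rmat_det ?D \<noteq> 0" "rmat_det ?X \<noteq> 0" "rmat_det ?E \<noteq> 0" "rmat_det (e, b, 0, 1) \<noteq> 0"
    using e by (simp_all add: rmat_det_simps)
  have "rat_vge p (int N) y" using rat_val_prime_power[OF assms(1)] by (simp add: y_def rat_vge_def)
  hence "\<rho> (mat2_of_rat p ?X, 1) = mat 1"
    using assms(1,3) mat2_of_rat_in_Kn by (simp add: rmat_det_simps)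
  hence "\<rho> (mat2_of_rat p (e, b, 0, 1), 1) = \<rho> (mat2_of_rat p ?D, 1)"
    using rep_mult_mat2_of_rat[OF assms(1,2) dets(1,2)] sign(1) ey by (simp add: rmat_mul_simps)
  hence "\<rho> (mat2_of_rat p (1, b, 0, 1), 1) = \<rho> (mat2_of_rat p ?D, 1) ** \<rho> (mat2_of_rat p ?E, 1)"
    using rep_mult_mat2_of_rat[OF assms(1,2) dets(4,3)] sign(2) e by (simp add: rmat_mul_simps)
  also have "\<dots> = \<rho> (gt_one p)"
    using rep_mult_mat2_of_rat[OF assms(1,2) dets(1,3)] sign(3) e
    by (simp add: rmat_mul_simps gt_one_eq_mat2_of_rat)
  finally show ?thesis using assms(2) by (simp add: is_rep_def)
qed

lemma rep_unipotent_product_eq_1: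
  assumes "prime p" "is_rep p \<rho>" "\<And>g. g \<in> Kn p N \<Longrightarrow> \<rho> (g, 1) = mat 1"
  defines "y \<equiv> of_nat p ^ N"
  shows "\<rho> (mat2_of_rat p (1 + x * y, x, y, 1), 1) = mat 1"
proof -
  have y: "y \<noteq> 0" and "rat_vge p (int N) y"
    using prime_gt_0_nat[OF assms(1)] rat_val_prime_power[OF assms(1)]
    by (simp_all add: y_def rat_vge_def)
  hence "\<rho> (mat2_of_rat p (1, 0, y, 1), 1) = mat 1"
    using assms(1,3) mat2_of_rat_in_Kn by (simp add: rmat_det_simps)
  moreover have "rat_sigma p (1, x, 0, 1) (1, 0, y, 1) = 1"
    using hilbert_one_right[OF assms(1) y] y
    by (simp add: rat_sigma_def rmat_mul_simps rmat_det_simps rmat_c_def)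
  ultimately show ?thesis
    using rep_mult_mat2_of_rat[OF assms(1,2), of "(1, x, 0, 1)" "(1, 0, y, 1)"]
      rep_upper_unipotent_eq_1[OF assms(1-3), where b = x]
    by (simp add: rmat_mul_simps rmat_det_simps)
qed

text \<open>H = M + l commutes with M. With l s = p - 1 and x y = s - 2 - l one gets c(MH) = c(HM) = y s,
  det M = 1 and det H = p, so the cocycle is (s, s) in one order and (s, p s) in the other.\<close>
lemma commuting_pair_rat_sigma:
  fixes x y s l :: rat
  defines "M \<equiv> (1 + x * y, x, y, 1)" and "H \<equiv> (1 + x * y + l, x, y, 1 + l)"
  assumes "prime p" "s \<noteq> 0" "rat_val p s = 0" "y \<noteq> 0" "s * l = of_nat p - 1" "x * y = s - 2 - l"
  shows "rmat_mul H M = rmat_mul M H" and "rmat_det H = of_nat p"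
    and "rat_sigma p M H = 1"
    and "rat_sigma p H M = hilbert p (qof_rat p s) (qof_rat p (of_nat p * s))"
proof -
  show "rmat_mul H M = rmat_mul M H" by (simp add: M_def H_def rmat_mul_simps algebra_simps)
  show detH: "rmat_det H = of_nat p"
    unfolding H_def rmat_det_simps assms(8) using assms(7) by (simp add: algebra_simps)
  have "y * (1 + x * y + l) + 1 * y = y * s" unfolding assms(8) by (simp add: algebra_simps)
  hence cMH: "rmat_c (rmat_mul M H) = y * s"
    unfolding M_def H_def rmat_mul_simps using assms(4,6) by (simp add: rmat_c_def)
  have "y * (1 + x * y) + (1 + l) * y = y * s" unfolding assms(8) by (simp add: algebra_simps)
  hence cHM: "rmat_c (rmat_mul H M) = y * s"
    unfolding M_def H_def rmat_mul_simps using assms(4,6) by (simp add: rmat_c_def)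
  have cM: "rmat_c M = y" and cH: "rmat_c H = y" and detM: "rmat_det M = 1"
    using assms(6) by (simp_all add: M_def H_def rmat_c_def rmat_det_simps)
  show "rat_sigma p M H = 1"
    unfolding rat_sigma_def cMH cM cH detM using hilbert_unit_self[OF assms(3-5)] assms(6) by simp
  show "rat_sigma p H M = hilbert p (qof_rat p s) (qof_rat p (of_nat p * s))"
    unfolding rat_sigma_def cHM cM cH detH using assms(6) by (simp add: mult.commute)
qed

lemma matrix_mul_uminus_mat_1:
  fixes A :: "'a::ring_1 ^'n ^'m"
  shows "A ** (- mat 1) = - A"
proof -
  have "A ** (mat 1 + - mat 1) = 0" by simp
  hence "A + A ** (- mat 1) = 0" by (simp only: matrix_add_ldistrib matrix_mul_rid)
  thus ?thesis by (simp add: add_eq_0_iff)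
qed

lemma matrix_eq_uminus_imp_zero:
  fixes A :: "'k::field ^'n ^'m"
  assumes "(2::'k) \<noteq> 0" "A = - A"
  shows "A = 0"
proof -
  have "A $ i $ j = 0" for i j
  proof -
    have "A $ i $ j = - (A $ i $ j)" using assms(2) by (metis vector_uminus_component)
    hence "2 * A $ i $ j = 0" by (metis add.right_inverse mult_2)
    thus ?thesis using assms(1) by simp
  qed
  thus ?thesis by (simp add: vec_eq_iff)
qed

lemma genuine_rep_no_anticommuting_lifts:
  fixes \<rho> :: "mat2 \<times> int \<Rightarrow> 'k::field ^'n::finite ^'n"
  assumes "prime p" "is_rep p \<rho>" "is_genuine p \<rho>" "(2::'k) \<noteq> 0"
    and "rmat_det A \<noteq> 0" "rmat_det B \<noteq> 0" "rmat_mul B A = rmat_mul A B"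
    and "rat_sigma p A B = 1" "rat_sigma p B A = -1" "\<rho> (mat2_of_rat p A, 1) = mat 1"
  shows False
proof -
  let ?C = "mat2_of_rat p (rmat_mul A B)" and ?R = "\<rho> (mat2_of_rat p B, 1)"
  have detC: "rmat_det (rmat_mul A B) \<noteq> 0" using assms(5,6) by (simp add: rmat_det_mul)
  have "\<rho> (?C, 1) = ?R" using rep_mult_mat2_of_rat[OF assms(1,2,5,6)] assms(8,10) by simp
  moreover have "\<rho> (?C, -1) = ?R" using rep_mult_mat2_of_rat[OF assms(1,2,6,5)] assms(7,9,10)
    by simp
  moreover have "\<rho> (?C, -1) = \<rho> (?C, 1) ** (- mat 1)"
  proof -
    have "(?C, 1) \<in> Gt p" "(mone p, -1) \<in> Gt p"
      using mat2_of_rat_in_Gt[OF assms(1) detC] mat2_of_rat_in_Gt[OF assms(1), of "(1, 0, 0, 1)"]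
      by (simp_all add: mone_eq_mat2_of_rat rmat_det_simps)
    thus ?thesis
      using assms(2,3) gt_mult_mone_minus_one[OF assms(1) detC, of 1]
      unfolding is_rep_def is_genuine_def by (metis mult_minus1)
  qed
  ultimately have "?R = - ?R" by (simp add: matrix_mul_uminus_mat_1)
  hence R0: "?R = 0" by (rule matrix_eq_uminus_imp_zero[OF assms(4)])
  obtain y where "y \<in> Gt p" "gt_mult p (mat2_of_rat p B, 1) y = gt_one p"
    using gt_mult_mat2_of_rat_right_inverse[OF assms(1,6)] by blast
  hence "mat 1 = ?R ** \<rho> y"
    using assms(2) mat2_of_rat_in_Gt[OF assms(1,6)] unfolding is_rep_def by metis
  hence "(mat 1 :: 'k ^'n ^'n) = 0" using R0 by simp
  moreover have "(mat 1 :: 'k ^'n ^'n) $ i $ i = 1" for i by (simp add: mat_def)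
  ultimately show False by simp
qed

lemma primroot_power_half_mod_neq_1:
  assumes "prime p" "p \<ge> 3" "residue_primroot p g"
  shows "(int g ^ ((p - 1) div 2)) mod int p \<noteq> 1"
proof
  let ?k = "(p - 1) div 2"
  assume "(int g ^ ?k) mod int p = 1"
  hence "[int (g ^ ?k) = int 1] (mod int p)" using assms(2) by (simp add: cong_def)
  hence "[g ^ ?k = 1] (mod p)" by (simp only: cong_int_iff)
  moreover have "ord p g = p - 1"
    using assms(1,3) totient_prime unfolding residue_primroot_def by auto
  ultimately have "p - 1 dvd ?k" using ord_divides by metis
  moreover have "0 < ?k" "?k < p - 1" using assms(2) by simp_all
  ultimately show False using dvd_imp_le[of "p - 1" ?k] by simp
qed

lemma exists_unit_hilbert_prime_mult_eq_minus_1: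
  assumes "prime p" "odd p"
  obtains s where "s \<noteq> 0" "rat_val p s = 0"
    "hilbert p (qof_rat p s) (qof_rat p (of_nat p * s)) = -1"
proof -
  have p3: "p \<ge> 3" using prime_ge_2_nat[OF assms(1)] assms(2) by (cases "p = 2") auto
  obtain g where g: "residue_primroot p g"
    using prime_primitive_root_exists[of p] assms(1) prime_gt_1_nat by blast
  hence cop: "coprime p g" unfolding residue_primroot_def by auto
  have nd: "\<not> int p dvd int g"
  proof
    assume "int p dvd int g"
    hence "is_unit p" using cop coprime_common_divisor by auto
    thus False using p3 by simp
  qed
  have "(int g ^ ((p - 1) div 2)) mod int p \<noteq> 1" by (rule primroot_power_half_mod_neq_1[OF assms(1) p3 g])
  hence "hilbert p (qof_rat p (1 / of_int (int g))) (qof_rat p (of_nat p / of_int (int g))) = -1"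
    using hilbert_unit_prime_mult[OF assms(1) nd] by (simp add: power_mod)
  moreover have "g \<noteq> 0" using nd by (metis dvd_0_right of_nat_0)
  moreover have "rat_val p (1 / of_int (int g)) = 0"
    using rat_val_inverse[OF assms(1), of "of_int (int g)"] rat_val_of_int_eq_0[OF assms(1) nd]
      \<open>g \<noteq> 0\<close>
    by (simp add: divide_inverse)
  ultimately show ?thesis using that[of "1 / of_int (int g)"] by simp
qed

theorem lemma4p5:
  fixes p :: nat
  assumes "prime p" and "odd p"
    and "CHAR('k::alg_closed_field) = p"
  shows "\<not> (\<exists>\<rho> :: mat2 \<times> int \<Rightarrow> 'k ^'n::finite ^'n.
              is_rep p \<rho> \<and> is_smooth p \<rho> \<and> is_genuine p \<rho>)"
proof
  assume "\<exists>\<rho> :: mat2 \<times> int \<Rightarrow> 'k ^'n ^'n. is_rep p \<rho> \<and> is_smooth p \<rho> \<and> is_genuine p \<rho>"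
  then obtain \<rho> :: "mat2 \<times> int \<Rightarrow> 'k ^'n ^'n"
    where rep: "is_rep p \<rho>" and smooth: "is_smooth p \<rho>" and genuine: "is_genuine p \<rho>" by blast
  obtain N where KN: "\<And>g. g \<in> Kn p N \<Longrightarrow> \<rho> (g, 1) = mat 1"
    using smooth_rep_trivial_on_Kn[OF smooth] by blast
  obtain s where s: "s \<noteq> 0" "rat_val p s = 0"
      "hilbert p (qof_rat p s) (qof_rat p (of_nat p * s)) = -1"
    using exists_unit_hilbert_prime_mult_eq_minus_1[OF assms(1,2)] by blast
  define y :: rat where "y = of_nat p ^ N"
  define l where "l = (of_nat p - 1) / s"
  define x where "x = (s - 2 - l) / y"
  have y: "y \<noteq> 0" using prime_gt_0_nat[OF assms(1)] by (simp add: y_def)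
  have l: "s * l = of_nat p - 1" and x: "x * y = s - 2 - l" using s(1) y
    by (simp_all add: l_def x_def)
  note pair = commuting_pair_rat_sigma[OF assms(1) s(1,2) y l x]
  have "(2::'k) \<noteq> 0"
    using assms(2,3) of_nat_eq_0_iff_char_dvd[of 2, where 'a='k] prime_ge_2_nat[OF assms(1)]
    by (auto dest: dvd_imp_le)
  moreover have "rmat_det (1 + x * y, x, y, 1) \<noteq> 0" by (simp add: rmat_det_simps)
  moreover have "rmat_det (1 + x * y + l, x, y, 1 + l) \<noteq> 0"
    using pair(2) prime_gt_0_nat[OF assms(1)] by simp
  moreover have "\<rho> (mat2_of_rat p (1 + x * y, x, y, 1), 1) = mat 1"
    using rep_unipotent_product_eq_1[OF assms(1) rep KN, where x = x] by (simp add: y_def)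
  ultimately show False
    using genuine_rep_no_anticommuting_lifts[OF assms(1) rep genuine] pair(1,3,4) s(3) by simp
qed

end
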